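(* Let $q$ be a prime power, $l\ge1$, $t=q^l$, $G_6(x)=x^{t+1}+1$, and $L_6=\{\alpha\in GF(t^2):\ G_6(\alpha)\ne0\}$. For every integer $i$ with $1<i<q-1$, the minimum distance of the $q$-ary Goppa code $\Gamma_6^{(i)}=\Gamma(L_6,G_6^{\,i})$ equals $i(t+1)+1$.
   Context: For a set $L=\{\alpha_1,\dots,\alpha_n\}$ of distinct elements of $GF(t^2)$ and $P\in GF(t^2)[x]$ with $P(\alpha_k)\neq0$ for all $k$, the $q$-ary Goppa code is $\Gamma(L,P)=\{c\in GF(q)^n:\ \sum_k \frac{c_k}{x-\alpha_k}\equiv 0 \pmod{P(x)}\}$; its minimum distance is the minimum Hamming weight of a nonzero codeword. *)

theory Defs
  imports "HOL-Computational_Algebra.Computational_Algebra" "HOL-Library.Cardinality"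
begin

text \<open>The subfield GF(q) of a finite field F with q | ... is the set of roots of x^q - x.\<close>
definition subfield_GF :: "nat \<Rightarrow> 'a::field set" where
  "subfield_GF q = {x. x ^ q = x}"

text \<open>An inverse of (x - a) modulo P, i.e. a polynomial u with (x - a) u = 1 mod P
  (unique modulo P when P(a) is nonzero).\<close>
definition inv_mod_lin :: "'a::field poly \<Rightarrow> 'a \<Rightarrow> 'a poly" where
  "inv_mod_lin P a = (SOME u. P dvd ([:-a, 1:] * u - 1))"

text \<open>q-ary Goppa code Gamma(L,P): words indexed by the elements of L, entries in GF(q),
  with sum_k c_k/(x - alpha_k) = 0 mod P.\<close>
definition goppa_code :: "nat \<Rightarrow> 'a::field set \<Rightarrow> 'a poly \<Rightarrow> ('a \<Rightarrow> 'a) set" where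
  "goppa_code q L P = {c. (\<forall>a. a \<notin> L \<longrightarrow> c a = 0) \<and> (\<forall>a\<in>L. c a \<in> subfield_GF q) \<and>
      P dvd (\<Sum>a\<in>L. smult (c a) (inv_mod_lin P a))}"

definition hamming_weight :: "'b set \<Rightarrow> ('b \<Rightarrow> 'a::zero) \<Rightarrow> nat" where
  "hamming_weight L c = card {a\<in>L. c a \<noteq> 0}"

definition min_distance :: "'b set \<Rightarrow> ('b \<Rightarrow> 'a::zero) set \<Rightarrow> nat" where
  "min_distance L C = Inf {hamming_weight L c | c. c \<in> C \<and> c \<noteq> (\<lambda>_. 0)}"

end

theory Submission
  imports Defs
begin

text \<open>
  If a nonzero codeword \<open>c\<close> has support \<open>W\<close>, clearing denominators shows that \<open>P\<close>
  divides \<open>N = \<Sum>a\<in>W. c a \<Prod>b\<in>W-{a}. (x - b)\<close>, a nonzero polynomial of degree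
  \<open>< |W|\<close>; hence every Goppa code has minimum distance at least \<open>deg P + 1\<close>.
  Conversely, for a set \<open>S\<close> of \<open>deg P + 1\<close> points, Lagrange interpolation makes
  \<open>c a = P(a) / \<Prod>b\<in>S-{a}. (a - b)\<close> a codeword, provided these values lie in \<open>GF(q)\<close>.

  For \<open>P = G6^i\<close> take \<open>S = {0} \<union> {x. x^(t+1) \<in> B}\<close> with \<open>B \<subseteq> GF(q) - {0, -1}\<close>
  of size \<open>i\<close>. Each fibre of the norm \<open>x \<mapsto> x^(t+1)\<close> over \<open>B\<close> has \<open>t + 1\<close> points,
  so \<open>|S| = i(t + 1) + 1\<close>, and \<open>S\<close> avoids the roots of \<open>G6\<close> because \<open>-1 \<notin> B\<close>.
  The product \<open>\<Prod>b\<in>S-{a}. (a - b)\<close> is the derivative at \<open>a\<close> of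
  \<open>x \<Prod>\<beta>\<in>B. (x^(t+1) - \<beta>)\<close>, which, as the characteristic divides \<open>t\<close>, is a
  polynomial in the norm \<open>a^(t+1) \<in> GF(q)\<close>; so is \<open>G6(a)^i = (a^(t+1) + 1)^i\<close>.
\<close>

section \<open>Finite fields\<close>

lemma power_card_finite_field:
  fixes x :: "'a::{field,finite}"
  shows "x ^ CARD('a) = x"
proof (cases "x = 0")
  case True
  then show ?thesis by simp
next
  case False
  have card_Suc: "CARD('a) = Suc (CARD('a) - 1)"
    using finite_UNIV_card_ge_0[where ?'a = 'a] by simp
  have "x ^ (CARD('a) - 1) * (\<Prod>y\<in>UNIV-{0}. y) = (\<Prod>y\<in>UNIV-{0}. x * y)"
    by (simp add: prod.distrib)
  also have "\<dots> = (\<Prod>y\<in>UNIV-{0}. y)"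
    by (rule prod.reindex_bij_witness[of _ "\<lambda>y. y / x" "\<lambda>y. x * y"]) (use False in auto)
  finally have "x ^ (CARD('a) - 1) = 1"
    by simp
  then show ?thesis
    by (metis card_Suc mult.right_neutral power_Suc)
qed

lemma card_finite_field_ge_2: "CARD('a::{field,finite}) \<ge> 2"
proof -
  have "card {0, 1::'a} \<le> CARD('a)"
    by (rule card_mono) auto
  then show ?thesis
    by simp
qed

lemma CHAR_dvd_CARD: "CHAR('a::{ring_1,finite}) dvd CARD('a)"
proof -
  have "(\<Sum>y\<in>UNIV. y) + of_nat CARD('a) = (\<Sum>y\<in>UNIV. y + (1::'a))"
    by (simp add: sum.distrib)
  also have "\<dots> = (\<Sum>y\<in>UNIV. y)"
    by (rule sum.reindex_bij_witness[of _ "\<lambda>y. y - 1" "\<lambda>y. y + 1"]) auto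
  finally show ?thesis
    by (simp add: of_nat_eq_0_iff_char_dvd[symmetric])
qed

lemma CHAR_eq_prime_of_CARD:
  assumes "prime p" and "CARD('a::{field,finite}) = p ^ n"
  shows "CHAR('a) = p"
proof -
  have "prime CHAR('a)"
    by (intro prime_CHAR_semidom finite_imp_CHAR_pos) simp
  moreover have "CHAR('a) dvd p ^ n"
    using CHAR_dvd_CARD[where 'a = 'a] assms(2) by simp
  ultimately show ?thesis
    using assms(1) prime_dvd_power primes_dvd_imp_eq by blast
qed

lemma dvd_power_diff_power: "(x - y :: 'a::comm_ring_1) dvd x ^ n - y ^ n"
  by (metis dvdI power_diff_sumr2)

lemma degree_X_power_diff:
  fixes p :: "'a::field poly"
  assumes "degree p < n"
  shows "degree ([:0,1:] ^ n - p) = n" and "lead_coeff ([:0,1:] ^ n - p) = 1"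
proof -
  have X_n: "degree ([:0,1::'a:] ^ n) = n"
    by (simp add: degree_power_eq)
  then show deg: "degree ([:0,1:] ^ n - p) = n"
    using degree_add_eq_left[of "-p" "[:0,1:] ^ n"] assms by simp
  have "coeff p n = 0"
    using assms by (simp add: coeff_eq_0)
  then show "lead_coeff ([:0,1:] ^ n - p) = 1"
    by (simp add: deg coeff_linear_power)
qed

definition splits_distinct :: "'a::idom poly \<Rightarrow> bool" where
  "splits_distinct p \<longleftrightarrow> p \<noteq> 0 \<and> card {x. poly p x = 0} = degree p"

lemma splits_distinct_dvd:
  fixes f g :: "'a::idom poly"
  assumes "splits_distinct g" and "f dvd g"
  shows "splits_distinct f"
proof -
  obtain h where g: "g = f * h"
    using assms(2) by blast
  have "f \<noteq> 0" and "h \<noteq> 0" and "g \<noteq> 0"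
    using assms(1) g by (auto simp: splits_distinct_def)
  have "degree f + degree h = degree g"
    using g \<open>f \<noteq> 0\<close> \<open>h \<noteq> 0\<close> by (simp add: degree_mult_eq)
  also have "\<dots> = card ({x. poly f x = 0} \<union> {x. poly h x = 0})"
    using assms(1) g by (simp add: splits_distinct_def Collect_disj_eq)
  also have "\<dots> \<le> card {x. poly f x = 0} + card {x. poly h x = 0}"
    by (rule card_Un_le)
  finally have "degree f + degree h \<le> card {x. poly f x = 0} + card {x. poly h x = 0}" .
  moreover have "card {x. poly f x = 0} \<le> degree f" and "card {x. poly h x = 0} \<le> degree h"
    using \<open>f \<noteq> 0\<close> \<open>h \<noteq> 0\<close> by (simp_all add: card_poly_roots_bound)
  ultimately show ?thesis
    using \<open>f \<noteq> 0\<close> by (simp add: splits_distinct_def)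
qed

lemma prod_linear_factors_dvd:
  fixes p :: "'a::field poly"
  assumes "finite S" and "\<forall>x\<in>S. poly p x = 0"
  shows "(\<Prod>x\<in>S. [:-x,1:]) dvd p"
  using assms
proof (induction S arbitrary: p rule: finite_induct)
  case empty
  then show ?case by simp
next
  case (insert a S)
  obtain r where r: "p = [:-a,1:] * r"
    using insert.prems by (auto simp: poly_eq_0_iff_dvd)
  have "\<forall>x\<in>S. poly r x = 0"
    using insert.prems insert.hyps(2) r by auto
  then have "(\<Prod>x\<in>S. [:-x,1:]) dvd r"
    by (rule insert.IH)
  then have "[:-a,1:] * (\<Prod>x\<in>S. [:-x,1:]) dvd p"
    unfolding r by (rule mult_dvd_mono[OF dvd_refl])
  with insert.hyps show ?case
    by simp
qed

lemma splits_distinct_eq_prod: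
  fixes p :: "'a::field poly"
  assumes "splits_distinct p"
  shows "p = smult (lead_coeff p) (\<Prod>x\<in>{x. poly p x = 0}. [:-x,1:])"
proof -
  define S where "S = {x. poly p x = 0}"
  define Q where "Q = (\<Prod>x\<in>S. [:-x,1:])"
  have p0: "p \<noteq> 0" and card_S: "card S = degree p"
    using assms by (simp_all add: splits_distinct_def S_def)
  have "finite S"
    using p0 by (simp add: S_def poly_roots_finite)
  then have Q0: "Q \<noteq> 0" and deg_Q: "degree Q = card S"
    by (simp_all add: Q_def degree_prod_eq_sum_degree)
  have lc_Q: "lead_coeff Q = 1"
    using \<open>finite S\<close> unfolding Q_def by (simp add: lead_coeff_prod)
  obtain r where r: "p = Q * r"
    using prod_linear_factors_dvd[OF \<open>finite S\<close>] by (auto simp: S_def Q_def)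
  with p0 have "r \<noteq> 0"
    by auto
  with r Q0 have "degree r = 0"
    using deg_Q card_S by (simp add: degree_mult_eq)
  then obtain c where "r = [:c:]"
    by (rule degree_eq_zeroE)
  with r have p: "p = smult c Q"
    by (simp add: mult.commute)
  with lc_Q have "lead_coeff p = c"
    by simp
  with p show ?thesis
    by (simp add: S_def Q_def)
qed

lemma splits_distinct_X_power_card_minus_X:
  "splits_distinct ([:0,1:] ^ CARD('a) - [:0,1::'a::{field,finite}:])"
proof -
  have deg: "degree ([:0,1:] ^ CARD('a) - [:0,1::'a:]) = CARD('a)"
    using card_finite_field_ge_2[where 'a = 'a] by (intro degree_X_power_diff) simp
  have "{x. poly ([:0,1:] ^ CARD('a) - [:0,1::'a:]) x = 0} = UNIV"
    by (simp add: power_card_finite_field)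
  then show ?thesis
    using deg card_finite_field_ge_2[where 'a = 'a] by (auto simp: splits_distinct_def)
qed

lemma card_roots_of_dvd_X_power_card_minus_X:
  fixes f :: "'a::{field,finite} poly"
  assumes "f dvd [:0,1:] ^ CARD('a) - [:0,1:]"
  shows "card {x. poly f x = 0} = degree f"
  using splits_distinct_dvd[OF splits_distinct_X_power_card_minus_X assms]
  by (simp add: splits_distinct_def)

lemma card_fixed_points_power:
  fixes q :: nat
  assumes "q \<ge> 2" and "(q - 1) dvd (CARD('a::{field,finite}) - 1)"
  shows "card {x::'a. x ^ q = x} = q"
proof -
  let ?X = "[:0,1::'a:]"
  obtain m where m: "CARD('a) - 1 = (q - 1) * m"
    using assms(2) by blast
  have X_mult: "?X * (?X ^ (n - 1) - 1) = ?X ^ n - ?X" if "n \<ge> 1" for n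
    using that by (simp add: right_diff_distrib power_Suc[symmetric])
  have "?X ^ (q - 1) - 1 dvd (?X ^ (q - 1)) ^ m - 1 ^ m"
    by (rule dvd_power_diff_power)
  also have "(?X ^ (q - 1)) ^ m - 1 ^ m = ?X ^ (CARD('a) - 1) - 1"
    by (simp only: m power_mult power_one)
  finally have "?X ^ (q - 1) - 1 dvd ?X ^ (CARD('a) - 1) - 1" .
  then have "?X * (?X ^ (q - 1) - 1) dvd ?X * (?X ^ (CARD('a) - 1) - 1)"
    by (rule mult_dvd_mono[OF dvd_refl])
  then have "?X ^ q - ?X dvd ?X ^ CARD('a) - ?X"
    using assms(1) card_finite_field_ge_2[where 'a = 'a] by (simp only: X_mult)
  then have "card {x. poly (?X ^ q - ?X) x = 0} = degree (?X ^ q - ?X)"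
    by (rule card_roots_of_dvd_X_power_card_minus_X)
  moreover have "degree (?X ^ q - ?X) = q"
    using assms(1) by (intro degree_X_power_diff) simp
  ultimately show ?thesis
    by simp
qed

lemma card_roots_power_eq:
  fixes \<beta> :: "'a::{field,finite}"
  assumes "n * m = CARD('a) - 1" and "\<beta> ^ m = 1"
  shows "card {x. x ^ n = \<beta>} = n"
proof -
  let ?X = "[:0,1::'a:]"
  have "n \<ge> 1"
    using assms(1) card_finite_field_ge_2[where 'a = 'a] by (cases n) auto
  have "?X ^ n - [:\<beta>:] dvd (?X ^ n) ^ m - [:\<beta>:] ^ m"
    by (rule dvd_power_diff_power)
  then have "?X ^ n - [:\<beta>:] dvd ?X ^ (CARD('a) - 1) - 1"
    by (simp add: assms power_mult[symmetric] poly_const_pow one_pCons)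
  then have "?X ^ n - [:\<beta>:] dvd ?X * (?X ^ (CARD('a) - 1) - 1)"
    by (rule dvd_mult)
  also have "?X * (?X ^ (CARD('a) - 1) - 1) = ?X ^ CARD('a) - ?X"
    using card_finite_field_ge_2[where 'a = 'a]
    by (simp add: right_diff_distrib power_Suc[symmetric])
  finally have "card {x. poly (?X ^ n - [:\<beta>:]) x = 0} = degree (?X ^ n - [:\<beta>:])"
    by (rule card_roots_of_dvd_X_power_card_minus_X)
  moreover have "degree (?X ^ n - [:\<beta>:]) = n"
    using \<open>n \<ge> 1\<close> by (intro degree_X_power_diff) simp
  ultimately show ?thesis
    by simp
qed

section \<open>The subfield \<open>GF(q)\<close>\<close>

lemma subfield_GF_add:
  fixes x y :: "'a::field"
  assumes "prime CHAR('a)" and "q = CHAR('a) ^ k"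
    and "x \<in> subfield_GF q" and "y \<in> subfield_GF q"
  shows "x + y \<in> subfield_GF q"
proof -
  have "(x + y) ^ q = x ^ q + y ^ q"
    by (rule freshmans_dream'[OF assms(1,2)])
  with assms(3,4) show ?thesis
    by (simp add: subfield_GF_def)
qed

lemma subfield_GF_uminus:
  fixes x :: "'a::field"
  assumes "prime CHAR('a)" and "q = CHAR('a) ^ k" and "x \<in> subfield_GF q"
  shows "- x \<in> subfield_GF q"
proof -
  have "q > 0"
    using assms(1,2) prime_gt_0_nat by simp
  then have "0 = (x + - x) ^ q"
    by simp
  also have "\<dots> = x ^ q + (- x) ^ q"
    by (rule freshmans_dream'[OF assms(1,2)])
  also have "\<dots> = x + (- x) ^ q"
    using assms(3) by (simp add: subfield_GF_def)
  finally have "(- x) ^ q = - x"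
    by (simp add: add_eq_0_iff)
  then show ?thesis
    by (simp add: subfield_GF_def)
qed

lemma subfield_GF_diff:
  fixes x y :: "'a::field"
  assumes "prime CHAR('a)" and "q = CHAR('a) ^ k"
    and "x \<in> subfield_GF q" and "y \<in> subfield_GF q"
  shows "x - y \<in> subfield_GF q"
  using subfield_GF_add[OF assms(1-3) subfield_GF_uminus[OF assms(1,2,4)]] by simp

lemma subfield_GF_mult:
  "x \<in> subfield_GF q \<Longrightarrow> y \<in> subfield_GF q \<Longrightarrow> (x * y :: 'a::field) \<in> subfield_GF q"
  by (simp add: subfield_GF_def power_mult_distrib)

lemma subfield_GF_power: "x \<in> subfield_GF q \<Longrightarrow> (x ^ n :: 'a::field) \<in> subfield_GF q"
  by (simp add: subfield_GF_def flip: power_mult) (metis mult.commute power_mult)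

lemma subfield_GF_divide:
  "x \<in> subfield_GF q \<Longrightarrow> y \<in> subfield_GF q \<Longrightarrow> (x / y :: 'a::field) \<in> subfield_GF q"
  by (simp add: subfield_GF_def power_divide)

lemma subfield_GF_0: "q > 0 \<Longrightarrow> (0::'a::field) \<in> subfield_GF q"
  by (simp add: subfield_GF_def)

lemma subfield_GF_1: "(1::'a::field) \<in> subfield_GF q"
  by (simp add: subfield_GF_def)

lemma subfield_GF_sum:
  assumes "prime CHAR('a::field)" and "q = CHAR('a) ^ k"
    and "\<And>x. x \<in> A \<Longrightarrow> f x \<in> subfield_GF q"
  shows "(\<Sum>x\<in>A. f x :: 'a) \<in> subfield_GF q"
proof -
  have "(0::'a) \<in> subfield_GF q"
    using assms(1,2) prime_gt_0_nat by (simp add: subfield_GF_0)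
  then show ?thesis
    using assms(3)
    by (induction A rule: infinite_finite_induct) (simp_all add: subfield_GF_add[OF assms(1,2)])
qed

lemma subfield_GF_prod:
  "(\<And>x. x \<in> A \<Longrightarrow> f x \<in> subfield_GF q) \<Longrightarrow>
    (\<Prod>x\<in>A. f x :: 'a::field) \<in> subfield_GF q"
  by (induction A rule: infinite_finite_induct) (simp_all add: subfield_GF_1 subfield_GF_mult)

lemma subfield_GF_power_power: "x \<in> subfield_GF q \<Longrightarrow> (x::'a::field) ^ (q ^ n) = x"
  by (induction n) (simp_all add: subfield_GF_def power_mult)

lemma card_subfield_GF:
  assumes "q \<ge> 2" and "CARD('a::{field,finite}) = q ^ m"
  shows "card (subfield_GF q :: 'a set) = q"
proof -
  have "int q - 1 dvd int q ^ m - 1 ^ m"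
    by (rule dvd_power_diff_power)
  then have "(q - 1) dvd (q ^ m - 1)"
    using assms(1) by (simp add: of_nat_diff flip: int_dvd_int_iff)
  then show ?thesis
    using card_fixed_points_power[where 'a = 'a, OF assms(1)] assms(2) by (simp add: subfield_GF_def)
qed

section \<open>Goppa codes\<close>

text \<open>The numerator of \<open>\<Sum>a\<in>S. c a / (x - a)\<close> over the common denominator
  \<open>\<Prod>b\<in>S. (x - b)\<close>.\<close>

definition goppa_numerator :: "'a set \<Rightarrow> ('a \<Rightarrow> 'a) \<Rightarrow> 'a::field poly" where
  "goppa_numerator S c = (\<Sum>a\<in>S. smult (c a) (\<Prod>b\<in>S-{a}. [:-b,1:]))"

lemma poly_goppa_numerator:
  assumes "finite S" and "x \<in> S"
  shows "poly (goppa_numerator S c) x = c x * (\<Prod>b\<in>S-{x}. x - b)"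
proof -
  have "poly (goppa_numerator S c) x = (\<Sum>a\<in>S. c a * (\<Prod>b\<in>S-{a}. x - b))"
    by (simp add: goppa_numerator_def poly_sum poly_prod)
  also have "\<dots> = c x * (\<Prod>b\<in>S-{x}. x - b) + (\<Sum>a\<in>S-{x}. c a * (\<Prod>b\<in>S-{a}. x - b))"
    using assms by (simp add: sum.remove)
  also have "(\<Sum>a\<in>S-{x}. c a * (\<Prod>b\<in>S-{a}. x - b)) = 0"
    using assms by (intro sum.neutral) auto
  finally show ?thesis
    by simp
qed

lemma degree_goppa_numerator_le:
  assumes "finite S"
  shows "degree (goppa_numerator S c) \<le> card S - 1"
  unfolding goppa_numerator_def
proof (rule degree_sum_le[OF assms])
  fix a assume "a \<in> S"
  have "degree (smult (c a) (\<Prod>b\<in>S-{a}. [:-b,1:])) \<le> degree (\<Prod>b\<in>S-{a}. [:-b,1:])"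
    by (rule degree_smult_le)
  also have "\<dots> = card S - 1"
    using assms \<open>a \<in> S\<close> by (simp add: degree_prod_eq_sum_degree)
  finally show "degree (smult (c a) (\<Prod>b\<in>S-{a}. [:-b,1:])) \<le> card S - 1" .
qed

lemma pderiv_prod_linear_factors:
  "pderiv (\<Prod>b\<in>S. [:-b,1::'a::field:]) = goppa_numerator S (\<lambda>_. 1)"
  by (simp add: goppa_numerator_def pderiv_prod pderiv_pCons)

lemma inv_mod_lin_dvd:
  fixes P :: "'a::field poly"
  assumes "poly P a \<noteq> 0"
  shows "P dvd [:-a,1:] * inv_mod_lin P a - 1"
proof -
  have "poly (P - [:poly P a:]) a = 0"
    by simp
  then have "[:-a,1:] dvd P - [:poly P a:]"
    by (simp only: poly_eq_0_iff_dvd)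
  then obtain Q where Q: "P - [:poly P a:] = [:-a,1:] * Q"
    by (elim dvdE)
  define u where "u = smult (- inverse (poly P a)) Q"
  have "[:-a,1:] * u - 1 = smult (- inverse (poly P a)) (P - [:poly P a:]) - 1"
    unfolding u_def Q by (simp add: mult_smult_right)
  also have "\<dots> = smult (- inverse (poly P a)) P"
    using assms by (simp add: smult_diff_right one_pCons)
  finally have "P dvd [:-a,1:] * u - 1"
    by (simp only: dvd_smult dvd_refl)
  then show ?thesis
    unfolding inv_mod_lin_def by (rule someI)
qed

lemma goppa_sum_cong_numerator:
  fixes P :: "'a::field poly"
  assumes "finite S" and "\<forall>a\<in>S. poly P a \<noteq> 0"
  shows "P dvd (\<Prod>b\<in>S. [:-b,1:]) * (\<Sum>a\<in>S. smult (c a) (inv_mod_lin P a)) - goppa_numerator S c"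
proof -
  have factor: "smult x (X * R * u) - smult x R = smult x (R * (X * u - 1))"
    for x and X R u :: "'a poly"
    by (simp add: algebra_simps smult_diff_right)
  have "(\<Prod>b\<in>S. [:-b,1:]) * (\<Sum>a\<in>S. smult (c a) (inv_mod_lin P a)) - goppa_numerator S c
      = (\<Sum>a\<in>S. smult (c a) ((\<Prod>b\<in>S. [:-b,1:]) * inv_mod_lin P a) - smult (c a) (\<Prod>b\<in>S-{a}. [:-b,1:]))"
    by (simp add: goppa_numerator_def sum_distrib_left sum_subtractf mult_smult_right)
  also have "\<dots> = (\<Sum>a\<in>S. smult (c a) ((\<Prod>b\<in>S-{a}. [:-b,1:]) * ([:-a,1:] * inv_mod_lin P a - 1)))"
    using assms(1) by (intro sum.cong refl) (simp only: prod.remove factor)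
  also have "P dvd \<dots>"
  proof (intro dvd_sum dvd_smult dvd_mult)
    fix a assume "a \<in> S"
    with assms(2) show "P dvd [:-a,1:] * inv_mod_lin P a - 1"
      by (intro inv_mod_lin_dvd) blast
  qed
  finally show ?thesis .
qed

lemma dvd_prod_diff_one:
  fixes P :: "'b::comm_ring_1"
  assumes "\<And>a. a \<in> S \<Longrightarrow> P dvd f a - 1"
  shows "P dvd (\<Prod>a\<in>S. f a) - 1"
  using assms
proof (induction S rule: infinite_finite_induct)
  case (insert a S)
  have "f a * (\<Prod>a\<in>S. f a) - 1 = f a * ((\<Prod>a\<in>S. f a) - 1) + (f a - 1)"
    by (simp add: algebra_simps)
  also have "P dvd \<dots>"
    using insert by (simp add: dvd_add)
  finally show ?case
    using insert.hyps by simp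
qed simp_all

lemma dvd_goppa_sum_iff_dvd_numerator:
  fixes P :: "'a::field poly"
  assumes "finite S" and "\<forall>a\<in>S. poly P a \<noteq> 0"
  shows "P dvd (\<Sum>a\<in>S. smult (c a) (inv_mod_lin P a)) \<longleftrightarrow> P dvd goppa_numerator S c"
proof -
  define X where "X = (\<Prod>b\<in>S. [:-b,1:])"
  define V where "V = (\<Prod>b\<in>S. inv_mod_lin P b)"
  define Y where "Y = (\<Sum>a\<in>S. smult (c a) (inv_mod_lin P a))"
  have "P dvd (\<Prod>b\<in>S. [:-b,1:] * inv_mod_lin P b) - 1"
    using assms(2) by (intro dvd_prod_diff_one inv_mod_lin_dvd) simp
  then have inverse: "P dvd X * V - 1"
    by (simp only: X_def V_def prod.distrib)
  have cong: "P dvd X * Y - goppa_numerator S c"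
    unfolding X_def Y_def by (rule goppa_sum_cong_numerator[OF assms])
  show ?thesis
    unfolding Y_def[symmetric]
  proof
    assume "P dvd Y"
    then have "P dvd X * Y"
      by (rule dvd_mult)
    from dvd_diff[OF this cong] show "P dvd goppa_numerator S c"
      by simp
  next
    assume "P dvd goppa_numerator S c"
    from dvd_add[OF cong this] have XY: "P dvd X * Y"
      by simp
    have "P dvd V * (X * Y) - Y * (X * V - 1)"
      using dvd_diff[OF dvd_mult[OF XY, of V] dvd_mult[OF inverse, of Y]] .
    also have "V * (X * Y) - Y * (X * V - 1) = Y"
      by (simp add: algebra_simps)
    finally show "P dvd Y" .
  qed
qed

lemma goppa_code_weight_ge:
  fixes P :: "'a::field poly"
  assumes "finite L" and "\<forall>a\<in>L. poly P a \<noteq> 0" and "P \<noteq> 0"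
    and "c \<in> goppa_code q L P" and "c \<noteq> (\<lambda>_. 0)"
  shows "degree P + 1 \<le> hamming_weight L c"
proof -
  define W where "W = {a\<in>L. c a \<noteq> 0}"
  have "finite W" and "W \<subseteq> L"
    using assms(1) by (auto simp: W_def)
  have c_out: "\<forall>a. a \<notin> L \<longrightarrow> c a = 0"
    and c_dvd: "P dvd (\<Sum>a\<in>L. smult (c a) (inv_mod_lin P a))"
    using assms(4) by (simp_all add: goppa_code_def)
  obtain a0 where "a0 \<in> W"
    using assms(5) c_out by (auto simp: W_def)
  have "(\<Sum>a\<in>L. smult (c a) (inv_mod_lin P a)) = (\<Sum>a\<in>W. smult (c a) (inv_mod_lin P a))"
    using assms(1) by (intro sum.mono_neutral_right) (auto simp: W_def)
  with c_dvd \<open>finite W\<close> \<open>W \<subseteq> L\<close> assms(2) have "P dvd goppa_numerator W c"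
    using dvd_goppa_sum_iff_dvd_numerator[of W P c] by auto
  moreover have "goppa_numerator W c \<noteq> 0"
  proof
    assume "goppa_numerator W c = 0"
    then have "poly (goppa_numerator W c) a0 = 0"
      by simp
    with \<open>a0 \<in> W\<close> \<open>finite W\<close> show False
      by (simp add: poly_goppa_numerator W_def)
  qed
  ultimately have "degree P \<le> degree (goppa_numerator W c)"
    by (rule dvd_imp_degree_le)
  also have "\<dots> \<le> card W - 1"
    by (rule degree_goppa_numerator_le[OF \<open>finite W\<close>])
  finally have "degree P \<le> card W - 1" .
  moreover have "card W > 0"
    using \<open>a0 \<in> W\<close> \<open>finite W\<close> by (auto simp: card_gt_0_iff)
  ultimately show ?thesis
    by (simp add: hamming_weight_def W_def)
qed

lemma goppa_code_has_word_of_weight: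
  fixes P :: "'a::field poly"
  assumes "finite L" and "\<forall>a\<in>L. poly P a \<noteq> 0" and "S \<subseteq> L" and "card S = degree P + 1"
    and "q > 0" and "\<forall>a\<in>S. poly P a / (\<Prod>b\<in>S-{a}. a - b) \<in> subfield_GF q"
  shows "\<exists>c\<in>goppa_code q L P. c \<noteq> (\<lambda>_. 0) \<and> hamming_weight L c = degree P + 1"
proof -
  have "finite S"
    using assms(1,3) finite_subset by blast
  define c where "c a = (if a \<in> S then poly P a / (\<Prod>b\<in>S-{a}. a - b) else 0)" for a
  have prod_nz: "(\<Prod>b\<in>S-{a}. a - b) \<noteq> 0" for a
    using \<open>finite S\<close> by simp
  have "goppa_numerator S c = P"
  proof (rule poly_eqI_degree)
    fix x assume "x \<in> S"
    then show "poly (goppa_numerator S c) x = poly P x"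
      using prod_nz \<open>finite S\<close> by (simp add: poly_goppa_numerator c_def)
  next
    show "degree (goppa_numerator S c) < card S"
      using degree_goppa_numerator_le[OF \<open>finite S\<close>, of c] assms(4) by simp
    show "degree P < card S"
      using assms(4) by simp
  qed
  moreover have "\<forall>a\<in>S. poly P a \<noteq> 0"
    using assms(2,3) by blast
  ultimately have "P dvd (\<Sum>a\<in>S. smult (c a) (inv_mod_lin P a))"
    using dvd_goppa_sum_iff_dvd_numerator[OF \<open>finite S\<close>, of P c] by simp
  also have "(\<Sum>a\<in>S. smult (c a) (inv_mod_lin P a)) = (\<Sum>a\<in>L. smult (c a) (inv_mod_lin P a))"
    using assms(1,3) by (intro sum.mono_neutral_left) (auto simp: c_def)
  finally have "c \<in> goppa_code q L P"
    using assms(3,5,6) by (auto simp: goppa_code_def c_def subfield_GF_0)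
  moreover have "{a\<in>L. c a \<noteq> 0} = S"
    using assms(2,3) prod_nz by (auto simp: c_def)
  moreover have "S \<noteq> {}"
    using assms(4) by auto
  ultimately show ?thesis
    using assms(4) by (auto simp: hamming_weight_def)
qed

lemma min_distance_goppa_code:
  fixes P :: "'a::field poly"
  assumes "finite L" and "\<forall>a\<in>L. poly P a \<noteq> 0" and "S \<subseteq> L" and "card S = degree P + 1"
    and "q > 0" and "\<forall>a\<in>S. poly P a / (\<Prod>b\<in>S-{a}. a - b) \<in> subfield_GF q"
  shows "min_distance L (goppa_code q L P) = degree P + 1"
proof -
  obtain a where "a \<in> S"
    using assms(4) by fastforce
  with assms(2,3) have "P \<noteq> 0"
    by auto
  obtain c where c: "c \<in> goppa_code q L P" "c \<noteq> (\<lambda>_. 0)" "hamming_weight L c = degree P + 1"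
    using goppa_code_has_word_of_weight[OF assms] by blast
  show ?thesis
    unfolding min_distance_def
  proof (rule cInf_eq_minimum)
    show "degree P + 1 \<in> {hamming_weight L c |c. c \<in> goppa_code q L P \<and> c \<noteq> (\<lambda>_. 0)}"
      using c by (metis (mono_tags, lifting) mem_Collect_eq)
  next
    fix w assume "w \<in> {hamming_weight L c |c. c \<in> goppa_code q L P \<and> c \<noteq> (\<lambda>_. 0)}"
    then show "degree P + 1 \<le> w"
      using goppa_code_weight_ge[OF assms(1,2) \<open>P \<noteq> 0\<close>] by blast
  qed
qed

section \<open>The codes \<open>\<Gamma>(L6, G6\<^sup>i)\<close>\<close>

lemma poly_pderiv_X_times_prod_X_power_diff:
  fixes a :: "'a::field"
  assumes "of_nat t = (0::'a)"
  shows "poly (pderiv ([:0,1:] * (\<Prod>\<beta>\<in>B. [:0,1:] ^ (t+1) - [:\<beta>:]))) a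
       = (\<Prod>\<beta>\<in>B. a ^ (t+1) - \<beta>) + a ^ (t+1) * (\<Sum>\<beta>\<in>B. \<Prod>\<gamma>\<in>B-{\<beta>}. a ^ (t+1) - \<gamma>)"
proof -
  have pderiv_X: "pderiv [:0,1::'a:] = 1"
    by (simp add: pderiv_pCons)
  have pderiv_factor: "pderiv ([:0,1:] ^ (t+1) - [:\<beta>:]) = [:0,1::'a:] ^ t" for \<beta>
    using assms by (simp add: pderiv_diff pderiv_power_Suc pderiv_X del: power_Suc)
  have "pderiv ([:0,1:] * (\<Prod>\<beta>\<in>B. [:0,1:] ^ (t+1) - [:\<beta>:]))
      = [:0,1:] * (\<Sum>\<beta>\<in>B. (\<Prod>\<gamma>\<in>B-{\<beta>}. [:0,1:] ^ (t+1) - [:\<gamma>:]) * [:0,1:] ^ t)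
        + (\<Prod>\<beta>\<in>B. [:0,1:] ^ (t+1) - [:\<beta>:])"
    by (simp only: pderiv_mult pderiv_prod pderiv_factor pderiv_X mult_1_right)
  then show ?thesis
    by (simp add: poly_sum poly_prod sum_distrib_left sum_distrib_right mult_ac)
qed

lemma two_le_of_CARD_eq_square:
  assumes "CARD('a::{field,finite}) = t ^ 2"
  shows "t \<ge> 2"
proof (rule ccontr)
  assume "\<not> t \<ge> 2"
  then have "t ^ 2 \<le> 1"
    by (cases t) (auto simp: power2_eq_square)
  with assms card_finite_field_ge_2[where 'a = 'a] show False
    by simp
qed

lemma power_pred_eq_1_of_subfield_GF:
  assumes "\<beta> \<in> subfield_GF q" and "\<beta> \<noteq> 0" and "t = q ^ l"
  shows "(\<beta>::'a::field) ^ (t - 1) = 1"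
proof (cases t)
  case (Suc n)
  then have "\<beta> * \<beta> ^ n = \<beta> * 1"
    using assms subfield_GF_power_power[of \<beta> q l] by (simp flip: power_Suc)
  with Suc assms(2) show ?thesis
    by simp
qed simp

lemma card_norm_fibres:
  fixes B :: "'a::{field,finite} set"
  assumes "CARD('a) = t ^ 2" and "\<forall>\<beta>\<in>B. \<beta> ^ (t - 1) = 1"
  shows "card {x. x = 0 \<or> x ^ (t+1) \<in> B} = card B * (t + 1) + 1"
proof -
  have "t \<ge> 2"
    using assms(1) by (rule two_le_of_CARD_eq_square)
  then have B_nz: "0 \<notin> B"
    using assms(2) by (cases "t - 1") auto
  have "(t + 1) * (t - 1) = CARD('a) - 1"
    using assms(1) \<open>t \<ge> 2\<close> by (cases t) (simp_all add: power2_eq_square)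
  then have fibre: "card {x::'a. x ^ (t+1) = \<beta>} = t + 1" if "\<beta> \<in> B" for \<beta>
    using assms(2) that by (intro card_roots_power_eq) auto
  have "card (\<Union>\<beta>\<in>B. {x::'a. x ^ (t+1) = \<beta>}) = (\<Sum>\<beta>\<in>B. card {x::'a. x ^ (t+1) = \<beta>})"
    by (rule card_UN_disjoint) auto
  also have "\<dots> = card B * (t + 1)"
    using fibre by simp
  finally have "card (insert 0 (\<Union>\<beta>\<in>B. {x::'a. x ^ (t+1) = \<beta>})) = card B * (t + 1) + 1"
    using B_nz by simp
  moreover have "{x. x = 0 \<or> x ^ (t+1) \<in> B} = insert 0 (\<Union>\<beta>\<in>B. {x::'a. x ^ (t+1) = \<beta>})"
    by auto
  ultimately show ?thesis
    by simp
qed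

lemma X_times_prod_X_power_diff_eq_prod:
  fixes B :: "'a::{field,finite} set"
  assumes "CARD('a) = t ^ 2" and "\<forall>\<beta>\<in>B. \<beta> ^ (t - 1) = 1"
  shows "[:0,1:] * (\<Prod>\<beta>\<in>B. [:0,1:] ^ (t+1) - [:\<beta>:])
    = (\<Prod>b\<in>{x. x = 0 \<or> x ^ (t+1) \<in> B}. [:-b,1:])"
proof -
  define S where "S = {x::'a. x = 0 \<or> x ^ (t+1) \<in> B}"
  define f where "f = [:0,1:] * (\<Prod>\<beta>\<in>B. [:0,1::'a:] ^ (t+1) - [:\<beta>:])"
  have deg_factor: "degree ([:0,1:] ^ (t+1) - [:\<beta>:]) = t + 1" for \<beta> :: 'a
    by (rule degree_X_power_diff(1)) simp
  have lc_factor: "lead_coeff ([:0,1:] ^ (t+1) - [:\<beta>:]) = 1" for \<beta> :: 'a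
    by (rule degree_X_power_diff(2)) simp
  have factor_nz: "[:0,1:] ^ (t+1) - [:\<beta>:] \<noteq> 0" for \<beta> :: 'a
    using lc_factor[of \<beta>] by auto
  have "f \<noteq> 0"
    using factor_nz by (simp add: f_def)
  have "degree (\<Prod>\<beta>\<in>B. [:0,1::'a:] ^ (t+1) - [:\<beta>:])
      = (\<Sum>\<beta>\<in>B. degree ([:0,1::'a:] ^ (t+1) - [:\<beta>:]))"
    by (rule degree_prod_eq_sum_degree) (use factor_nz in blast)
  also have "\<dots> = card B * (t + 1)"
    by (simp only: deg_factor) simp
  finally have "degree f = card S"
    using factor_nz card_norm_fibres[OF assms] by (simp add: f_def S_def degree_mult_eq)
  have "lead_coeff f = 1"
    by (simp only: f_def lead_coeff_mult lead_coeff_prod lc_factor prod.neutral_const) simp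
  have roots: "{x. poly f x = 0} = S"
    by (auto simp: f_def S_def poly_prod)
  with \<open>f \<noteq> 0\<close> \<open>degree f = card S\<close> have "splits_distinct f"
    by (simp add: splits_distinct_def)
  from splits_distinct_eq_prod[OF this] show "f = (\<Prod>b\<in>S. [:-b,1:])"
    unfolding roots \<open>lead_coeff f = 1\<close> by simp
qed

lemma prod_diff_norm_fibres_in_subfield_GF:
  fixes B :: "'a::{field,finite} set"
  assumes "prime CHAR('a)" and "q = CHAR('a) ^ k" and "t = q ^ l" and "CARD('a) = t ^ 2"
    and "B \<subseteq> subfield_GF q" and "\<forall>\<beta>\<in>B. \<beta> ^ (t - 1) = 1"
    and "a \<in> {x. x = 0 \<or> x ^ (t+1) \<in> B}"
  shows "(\<Prod>b\<in>{x. x = 0 \<or> x ^ (t+1) \<in> B}-{a}. a - b) \<in> subfield_GF q"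
proof -
  define S where "S = {x::'a. x = 0 \<or> x ^ (t+1) \<in> B}"
  have "t \<noteq> 1"
    using two_le_of_CARD_eq_square[OF assms(4)] by simp
  moreover have t_CHAR: "t = CHAR('a) ^ (k * l)"
    using assms(2,3) by (simp add: power_mult)
  ultimately have "CHAR('a) dvd t"
    by (cases "k * l") auto
  then have t_0: "of_nat t = (0::'a)"
    by (simp add: of_nat_eq_0_iff_char_dvd)
  have "(\<Prod>b\<in>S-{a}. a - b) = poly (pderiv (\<Prod>b\<in>S. [:-b,1:])) a"
    using poly_goppa_numerator[of S a "\<lambda>_. 1"] assms(7)
    by (simp add: S_def pderiv_prod_linear_factors)
  also have "\<dots> = poly (pderiv ([:0,1:] * (\<Prod>\<beta>\<in>B. [:0,1:] ^ (t+1) - [:\<beta>:]))) a"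
    by (simp only: S_def X_times_prod_X_power_diff_eq_prod[OF assms(4,6)])
  also have "\<dots> = (\<Prod>\<beta>\<in>B. a ^ (t+1) - \<beta>) + a ^ (t+1) * (\<Sum>\<beta>\<in>B. \<Prod>\<gamma>\<in>B-{\<beta>}. a ^ (t+1) - \<gamma>)"
    by (rule poly_pderiv_X_times_prod_X_power_diff[OF t_0])
  also have "\<dots> \<in> subfield_GF q"
  proof -
    have "q > 0"
      using assms(1,2) prime_gt_0_nat by simp
    with assms(5,7) have norm: "a ^ (t+1) \<in> subfield_GF q"
      by (auto simp: subfield_GF_0)
    have diff: "a ^ (t+1) - \<gamma> \<in> subfield_GF q" if "\<gamma> \<in> B" for \<gamma>
      using that assms(5) by (intro subfield_GF_diff[OF assms(1,2) norm]) blast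
    show ?thesis
      by (intro subfield_GF_add[OF assms(1,2)] subfield_GF_mult subfield_GF_prod
          subfield_GF_sum[OF assms(1,2)] norm diff) auto
  qed
  finally show ?thesis
    by (simp add: S_def)
qed

lemma obtain_subset_subfield_GF_minus_0_1:
  assumes "prime CHAR('a::{field,finite})" and "q = CHAR('a) ^ k" and "CARD('a) = q ^ m"
    and "i + 2 \<le> q"
  obtains B where "B \<subseteq> subfield_GF q - {0, -1::'a}" and "card B = i"
proof -
  have "{0, -1} \<subseteq> (subfield_GF q :: 'a set)"
    using assms(4) subfield_GF_uminus[OF assms(1,2) subfield_GF_1] by (simp add: subfield_GF_0)
  then have "card (subfield_GF q - {0, -1::'a}) = q - 2"
    using card_subfield_GF[where 'a = 'a, OF _ assms(3)] assms(4) by (simp add: card_Diff_subset)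
  with assms(4) have "i \<le> card (subfield_GF q - {0, -1::'a})"
    by simp
  then show ?thesis
    using that by (elim obtain_subset_with_card_n)
qed

lemma min_distance_goppa_code_X_power_plus_1:
  fixes q t i :: nat and G :: "'a::{field,finite} poly"
  assumes "prime CHAR('a)" and "q = CHAR('a) ^ k" and "t = q ^ l"
    and "CARD('a) = t ^ 2" and "i + 2 \<le> q"
    and G: "G = monom 1 (t + 1) + 1" and L: "L = {\<alpha>. poly G \<alpha> \<noteq> 0}"
  shows "min_distance L (goppa_code q L (G ^ i)) = i * (t + 1) + 1"
proof -
  have "CARD('a) = q ^ (l * 2)"
    using assms(3,4) by (simp add: power_mult)
  then obtain B where B: "B \<subseteq> subfield_GF q - {0, -1::'a}" "card B = i"
    by (rule obtain_subset_subfield_GF_minus_0_1[OF assms(1,2) _ assms(5)])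
  define S where "S = {x::'a. x = 0 \<or> x ^ (t+1) \<in> B}"
  have unit: "\<forall>\<beta>\<in>B. \<beta> ^ (t - 1) = 1"
    using B(1) assms(3) power_pred_eq_1_of_subfield_GF by blast
  have poly_G: "poly G a = a ^ (t+1) + 1" for a
    by (simp add: G poly_monom)
  have "degree G = t + 1"
    by (simp add: G degree_add_eq_left degree_monom_eq)
  then have "degree (G ^ i) = i * (t + 1)"
    by (subst degree_power_eq) auto
  moreover have "card S = degree (G ^ i) + 1"
    using card_norm_fibres[OF assms(4) unit] B(2) calculation by (simp add: S_def)
  moreover have "S \<subseteq> L"
    using B(1) by (auto simp: S_def L poly_G add_eq_0_iff2)
  moreover have "poly (G ^ i) a / (\<Prod>b\<in>S-{a}. a - b) \<in> subfield_GF q" if "a \<in> S" for a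
    using that B(1) assms(5) prod_diff_norm_fibres_in_subfield_GF[OF assms(1-4) _ unit, of a]
    by (auto simp: S_def poly_G subfield_GF_0 poly_power
        intro!: subfield_GF_divide subfield_GF_power subfield_GF_add[OF assms(1,2)] subfield_GF_1)
  ultimately show ?thesis
    using min_distance_goppa_code[of L "G ^ i" S q] assms(5)
    by (simp add: L poly_power)
qed

theorem theorem1:
  fixes q l t i :: nat
    and G6 :: "'a::{field,finite} poly" and L6 :: "'a set"
  assumes "\<exists>p k. prime p \<and> k > 0 \<and> q = p ^ k"
    and "l \<ge> 1"
    and "t = q ^ l"
    and "CARD('a) = t ^ 2"
    and "G6 = monom 1 (t + 1) + 1"
    and "L6 = {\<alpha>. poly G6 \<alpha> \<noteq> 0}"
    and "1 < i" and "i < q - 1"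
  shows "min_distance L6 (goppa_code q L6 (G6 ^ i)) = i * (t + 1) + 1"
proof -
  obtain p k where p: "prime p" "q = p ^ k"
    using assms(1) by blast
  have "CARD('a) = p ^ (k * l * 2)"
    using assms(3,4) p(2) by (simp add: power_mult)
  then have "CHAR('a) = p"
    by (rule CHAR_eq_prime_of_CARD[OF p(1)])
  then have char: "prime CHAR('a)" "q = CHAR('a) ^ k"
    using p by simp_all
  have "i + 2 \<le> q"
    using assms(8) by linarith
  from min_distance_goppa_code_X_power_plus_1[OF char assms(3,4) this assms(5,6)] show ?thesis .
qed

end
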